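(* Let $0<\alpha<1$, $T>0$, $N\ge1$, and let $\beta_0,\beta_1,\dots,\beta_N>0$ and $\tau_1,\dots,\tau_N>0$. Let $f:[0,T]\to\mathbb{R}$ with $f\in W^{3,\infty}(0,T)$. Divide $[0,T]$ into $N_T$ equal steps of size $\Delta_t=T/N_T$, with time points $t_n=n\Delta_t$, $n=0,\dots,N_T$, and put $f^n=f(t_n)$. For $k=1,\dots,N$ let $$q_k(t)=\int_0^t\beta_k\exp\!\Big[\frac{s-t}{\tau_k}\Big]f'(s)\,ds,$$ i.e. the solution of $q_k'(t)+\frac{1}{\tau_k}q_k(t)=\beta_k f'(t)$ with $q_k(0)=0$, and define the continuous Prony approximation $\hat D_t^\alpha f=\beta_0 f'(t)+\sum_{k=1}^N q_k(t)$. Define discrete values $q_k^n$ by $q_k^0=q_k(0)$ and $$q_k^n=e_k^2q_k^{n-1}+e_k\beta_k\,(f^n-f^{n-1}),\qquad e_k=\exp[-\Delta_t/(2\tau_k)],\quad n\ge1,$$ and the discrete Prony approximation $$\hat{\mathrm D}_n^\alpha f=\frac{\beta_0}{\Delta_t}(f^n-f^{n-1})+\sum_{k=1}^N q_k^n.$$ Then for any $t_n\in\{t_1,\dots,t_{N_T}\}$ $$\big|\hat D_{t_n}^\alpha f-\hat{\mathrm D}_n^\alpha f\big|\le \Delta_t\big(\beta_0/2+C(\boldsymbol\beta,\boldsymbol\tau)\Delta_t\big)\|f\|_{W^{3,\infty}(0,T)},$$ where $C(\boldsymbol\beta,\boldsymbol\tau)>0$ is a constant depending on the chosen $\beta_k,\tau_k$,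 $k=1,\dots,N$.
   Context: $W^{3,\infty}(0,T)$ is the Sobolev space of functions whose derivatives up to order $3$ are essentially bounded on $(0,T)$, with norm $\|f\|_{W^{3,\infty}(0,T)}$ controlling the $L^\infty$ norms of $f,f',f'',f'''$. $\boldsymbol\beta=(\beta_1,\dots,\beta_N)$, $\boldsymbol\tau=(\tau_1,\dots,\tau_N)$. *)

theory Defs
  imports "HOL-Analysis.Analysis"
begin

text \<open>f belongs to W^{3,infinity}(0,T), with classical derivatives f1 = f', f2 = f''
  on [0,T] (one-sided at the endpoints) and f'' Lipschitz (i.e. f''' essentially bounded).\<close>
definition W3inf :: "real \<Rightarrow> (real \<Rightarrow> real) \<Rightarrow> (real \<Rightarrow> real) \<Rightarrow> (real \<Rightarrow> real) \<Rightarrow> bool" where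
  "W3inf T f f1 f2 \<longleftrightarrow>
     (\<forall>t\<in>{0..T}. (f has_real_derivative f1 t) (at t within {0..T}) \<and>
                 (f1 has_real_derivative f2 t) (at t within {0..T})) \<and>
     (\<exists>L. L-lipschitz_on {0..T} f2)"

text \<open>W^{3,infinity}(0,T) norm: max of the sup norms of f, f', f'' and of f''' ;
  the latter equals the best Lipschitz constant of f''.\<close>
definition w3_norm :: "real \<Rightarrow> (real \<Rightarrow> real) \<Rightarrow> (real \<Rightarrow> real) \<Rightarrow> (real \<Rightarrow> real) \<Rightarrow> real" where
  "w3_norm T f f1 f2 =
     max (max (SUP t\<in>{0..T}. \<bar>f t\<bar>) (SUP t\<in>{0..T}. \<bar>f1 t\<bar>))
         (max (SUP t\<in>{0..T}. \<bar>f2 t\<bar>) (INF L\<in>{L. L-lipschitz_on {0..T} f2}. L))"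

definition q_cont :: "(nat \<Rightarrow> real) \<Rightarrow> (nat \<Rightarrow> real) \<Rightarrow> (real \<Rightarrow> real) \<Rightarrow> nat \<Rightarrow> real \<Rightarrow> real" where
  "q_cont \<beta> \<tau> f1 k t = integral {0..t} (\<lambda>s. \<beta> k * exp ((s - t) / \<tau> k) * f1 s)"

definition prony_cont :: "nat \<Rightarrow> (nat \<Rightarrow> real) \<Rightarrow> (nat \<Rightarrow> real) \<Rightarrow> (real \<Rightarrow> real) \<Rightarrow> real \<Rightarrow> real" where
  "prony_cont N \<beta> \<tau> f1 t = \<beta> 0 * f1 t + (\<Sum>k=1..N. q_cont \<beta> \<tau> f1 k t)"

text \<open>discrete values q_k^n with time step dt; q_k^0 = q_k(0) = 0\<close>
primrec q_disc :: "(nat \<Rightarrow> real) \<Rightarrow> (nat \<Rightarrow> real) \<Rightarrow> (real \<Rightarrow> real) \<Rightarrow> real \<Rightarrow> nat \<Rightarrow> nat \<Rightarrow> real" where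
  "q_disc \<beta> \<tau> f dt k 0 = 0"
| "q_disc \<beta> \<tau> f dt k (Suc n) =
     (exp (- dt / (2 * \<tau> k)))\<^sup>2 * q_disc \<beta> \<tau> f dt k n
     + exp (- dt / (2 * \<tau> k)) * \<beta> k * (f (real (Suc n) * dt) - f (real n * dt))"

definition prony_disc :: "nat \<Rightarrow> (nat \<Rightarrow> real) \<Rightarrow> (nat \<Rightarrow> real) \<Rightarrow> (real \<Rightarrow> real) \<Rightarrow> real \<Rightarrow> nat \<Rightarrow> real" where
  "prony_disc N \<beta> \<tau> f dt n =
     \<beta> 0 / dt * (f (real n * dt) - f (real (n - 1) * dt)) + (\<Sum>k=1..N. q_disc \<beta> \<tau> f dt k n)"

end

theory Submission
  imports Defs
begin

text \<open>
  The \<beta>_0 term compares f'(t_n) with a backward difference quotient, whose error is at most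
  \<Delta> |f''|/2. For a mode k, the variation-of-constants formula gives
  q_k(t_n) = e_k^2 q_k(t_{n-1}) + \<beta>_k \<integral> exp((s - t_n)/\<tau>_k) f'(s) ds over [t_{n-1}, t_n], so the
  error E^n = q_k(t_n) - q_k^n satisfies E^n = e_k^2 E^{n-1} + \<beta>_k l^n, where l^n is the error
  of replacing that integral by e_k (f^n - f^{n-1}), i.e. of freezing the kernel at the midpoint of
  the step. A midpoint expansion gives l^n = O(\<Delta>^3/\<tau>_k) when \<Delta> \<le> \<tau>_k, and a crude bound
  gives O(\<Delta>) otherwise; in both regimes l^n = O(\<Delta>^2 (1 - e_k^2)). As the recursion damps by
  e_k^2 per step, the accumulated error stays below the geometric-series limit O(\<Delta>^2),
  uniformly in n and T.
\<close>

lemma has_integral_real_derivative: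
  assumes "a \<le> b" and "\<And>t. t \<in> {a..b} \<Longrightarrow> (h has_real_derivative h' t) (at t within {a..b})"
  shows "(h' has_integral (h b - h a)) {a..b}"
  using assms by (intro fundamental_theorem_of_calculus) (auto simp: has_real_derivative_iff_has_vector_derivative)

lemma abs_diff_le_of_deriv_bound:
  fixes f :: "real \<Rightarrow> real"
  assumes "\<And>t. t \<in> {a..b} \<Longrightarrow> (f has_real_derivative f' t) (at t within {a..b})"
    and "\<And>t. t \<in> {a..b} \<Longrightarrow> \<bar>f' t\<bar> \<le> M"
    and "x \<in> {a..b}" "y \<in> {a..b}"
  shows "\<bar>f x - f y\<bar> \<le> M * \<bar>x - y\<bar>"
  using field_differentiable_bound[of "{a..b}" f f' M x y] assms by simp

lemma abs_exp_diff_le_nonpos: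
  fixes u v :: real
  assumes "u \<le> 0" "v \<le> 0"
  shows "\<bar>exp u - exp v\<bar> \<le> \<bar>u - v\<bar>"
  using field_differentiable_bound[of "{..0}" exp exp 1 u v] assms
  by (auto intro: DERIV_exp[THEN has_field_derivative_at_within])

lemma abs_exp_sub_exp_neg_le:
  fixes x :: real
  assumes "0 \<le> x" "x \<le> 1/2"
  shows "\<bar>exp x - exp (-x) - 2 * x\<bar> \<le> x ^ 3"
proof -
  obtain t1 where t1: "\<bar>t1\<bar> \<le> \<bar>x\<bar>" "exp x = (\<Sum>m<3. x ^ m / fact m) + exp t1 / fact 3 * x ^ 3"
    using Maclaurin_exp_le by blast
  obtain t2 where t2: "\<bar>t2\<bar> \<le> \<bar>-x\<bar>" "exp (-x) = (\<Sum>m<3. (-x) ^ m / fact m) + exp t2 / fact 3 * (-x) ^ 3"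
    using Maclaurin_exp_le by blast
  have "exp t1 \<le> exp 1" "exp t2 \<le> exp 1" using t1(1) t2(1) assms by auto
  then have bound: "exp t1 + exp t2 \<le> 6" using exp_le by linarith
  have taylor: "exp x - exp (-x) - 2 * x = (exp t1 + exp t2) / 6 * x ^ 3"
    using t1(2) t2(2) by (simp add: eval_nat_numeral fact_numeral field_simps)
  have "\<bar>exp x - exp (-x) - 2 * x\<bar> = (exp t1 + exp t2) / 6 * x ^ 3"
    unfolding taylor by (rule abs_of_nonneg) (use assms in simp)
  also have "\<dots> \<le> 1 * x ^ 3"
    using bound assms by (intro mult_right_mono) auto
  finally show ?thesis by simp
qed

lemma one_minus_exp_neg_ge_half:
  fixes y :: real
  assumes "0 \<le> y" "y \<le> 1"
  shows "y / 2 \<le> 1 - exp (- y)"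
proof -
  have "exp (- y) \<le> 1 / (1 + y)"
    using exp_ge_add_one_self[of y] assms by (simp add: exp_minus field_simps)
  also have "\<dots> \<le> 1 - y / 2"
  proof -
    have "y * y \<le> y" using assms by (simp add: mult_left_le_one_le)
    then show ?thesis using assms by (simp add: field_simps)
  qed
  finally show ?thesis by simp
qed

lemma has_integral_exp_kernel:
  fixes \<tau> :: real
  assumes "0 < \<tau>" "a \<le> b"
  shows "((\<lambda>s. exp ((s - b) / \<tau>)) has_integral \<tau> * (1 - exp (- (b - a) / \<tau>))) {a..b}"
proof -
  have "((\<lambda>s. exp ((s - b) / \<tau>)) has_integral \<tau> * exp ((b - b) / \<tau>) - \<tau> * exp ((a - b) / \<tau>)) {a..b}"
    using assms by (intro has_integral_real_derivative) (auto intro!: derivative_eq_intros)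
  then show ?thesis by (simp add: algebra_simps minus_divide_left)
qed

lemma exp_midpoint_rule_error:
  fixes \<tau> \<Delta> :: real
  assumes "0 < \<tau>" "0 \<le> \<Delta>" "\<Delta> \<le> \<tau>"
  shows "\<bar>\<tau> * (1 - exp (- \<Delta> / \<tau>)) - \<Delta> * exp (- \<Delta> / (2 * \<tau>))\<bar> \<le> \<Delta> ^ 3 / (8 * \<tau> ^ 2)"
proof -
  define x where "x = \<Delta> / (2 * \<tau>)"
  have x: "0 \<le> x" "x \<le> 1/2" using assms by (auto simp: x_def field_simps)
  have "exp (- \<Delta> / \<tau>) = exp (-x) * exp (-x)"
    using assms by (simp add: x_def flip: exp_add)
  then have "\<tau> * (1 - exp (- \<Delta> / \<tau>)) - \<Delta> * exp (- \<Delta> / (2 * \<tau>))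
      = \<tau> * exp (-x) * (exp x - exp (-x) - 2 * x)"
    using assms by (simp add: x_def exp_minus field_simps)
  also have "\<bar>\<dots>\<bar> \<le> \<tau> * 1 * x ^ 3"
    unfolding abs_mult using assms x abs_exp_sub_exp_neg_le[OF x]
    by (intro mult_mono) auto
  also have "\<dots> = \<Delta> ^ 3 / (8 * \<tau> ^ 2)"
    using assms by (simp add: x_def power3_eq_cube power2_eq_square)
  finally show ?thesis .
qed

text \<open>For a = t_{n-1}, b = t_n and \<tau> = \<tau>_k this is l^n: over the step the exact solution adds the
  integral to e_k^2 q_k(t_{n-1}), the scheme adds e_k (f^n - f^{n-1}).\<close>
definition exp_step_error :: "real \<Rightarrow> (real \<Rightarrow> real) \<Rightarrow> (real \<Rightarrow> real) \<Rightarrow> real \<Rightarrow> real \<Rightarrow> real" where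
  "exp_step_error \<tau> f f' a b =
     integral {a..b} (\<lambda>s. exp ((s - b) / \<tau>) * f' s) - exp (- (b - a) / (2 * \<tau>)) * (f b - f a)"

lemma abs_exp_step_error_le_crude:
  assumes "a \<le> b" "0 < \<tau>"
    and f': "\<And>t. t \<in> {a..b} \<Longrightarrow> (f has_real_derivative f' t) (at t within {a..b})"
    and cont: "continuous_on {a..b} f'"
    and bound: "\<And>t. t \<in> {a..b} \<Longrightarrow> \<bar>f' t\<bar> \<le> M"
  shows "\<bar>exp_step_error \<tau> f f' a b\<bar> \<le> 2 * M * (b - a)"
proof -
  have "norm (integral {a..b} (\<lambda>s. exp ((s - b) / \<tau>) * f' s)) \<le> M * (b - a)"
  proof (rule integral_bound)
    show "continuous_on {a..b} (\<lambda>s. exp ((s - b) / \<tau>) * f' s)"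
      by (intro continuous_intros cont) (use assms in simp)
    fix s assume s: "s \<in> {a..b}"
    have "exp ((s - b) / \<tau>) \<le> 1" using s assms by (simp add: divide_le_0_iff)
    then show "norm (exp ((s - b) / \<tau>) * f' s) \<le> M"
      using bound[OF s] mult_left_le_one_le[of "\<bar>f' s\<bar>" "exp ((s - b) / \<tau>)"]
      by (simp add: abs_mult)
  qed (use assms in auto)
  then have integral: "\<bar>integral {a..b} (\<lambda>s. exp ((s - b) / \<tau>) * f' s)\<bar> \<le> M * (b - a)" by simp
  have "\<bar>f b - f a\<bar> \<le> M * (b - a)"
    using abs_diff_le_of_deriv_bound[OF f' bound, of b a] assms by simp
  moreover have "exp (- (b - a) / (2 * \<tau>)) \<le> 1" using assms by (simp add: divide_le_0_iff)
  ultimately have "\<bar>exp (- (b - a) / (2 * \<tau>)) * (f b - f a)\<bar> \<le> M * (b - a)"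
    using mult_mono[of "exp (- (b - a) / (2 * \<tau>))" 1 "\<bar>f b - f a\<bar>" "M * (b - a)"]
    by (simp add: abs_mult)
  with integral show ?thesis
    unfolding exp_step_error_def by linarith
qed

lemma has_integral_exp_step_error_midpoint:
  assumes "a \<le> b" "0 < \<tau>"
    and f': "\<And>t. t \<in> {a..b} \<Longrightarrow> (f has_real_derivative f' t) (at t within {a..b})"
    and cont: "continuous_on {a..b} f'"
  defines "m \<equiv> (a + b) / 2"
  shows "((\<lambda>s. (exp ((s - b) / \<tau>) - exp ((m - b) / \<tau>)) * (f' s - f' m)) has_integral
           exp_step_error \<tau> f f' a b
           - f' m * (\<tau> * (1 - exp (- (b - a) / \<tau>)) - (b - a) * exp (- (b - a) / (2 * \<tau>)))) {a..b}"
proof -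
  define K where "K s = exp ((s - b) / \<tau>)" for s
  have Km: "K m = exp (- (b - a) / (2 * \<tau>))" by (simp add: K_def m_def field_simps)
  have "((\<lambda>s. K s * f' s) has_integral integral {a..b} (\<lambda>s. K s * f' s)) {a..b}"
    unfolding K_def using assms by (intro integrable_integral integrable_continuous_interval continuous_intros) auto
  moreover have "(f' has_integral (f b - f a)) {a..b}"
    using \<open>a \<le> b\<close> f' by (rule has_integral_real_derivative)
  moreover have "(K has_integral \<tau> * (1 - exp (- (b - a) / \<tau>))) {a..b}"
    unfolding K_def using assms(2,1) by (rule has_integral_exp_kernel)
  moreover have "((\<lambda>s. K m * f' m) has_integral (b - a) * (K m * f' m)) {a..b}"
    using has_integral_const_real[of "K m * f' m" a b] assms by simp
  ultimately have "((\<lambda>s. K s * f' s - K m * f' s - f' m * K s + K m * f' m) has_integral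
      integral {a..b} (\<lambda>s. K s * f' s) - K m * (f b - f a)
      - f' m * (\<tau> * (1 - exp (- (b - a) / \<tau>))) + (b - a) * (K m * f' m)) {a..b}"
    by (intro has_integral_add has_integral_diff has_integral_mult_right)
  then show ?thesis
    unfolding exp_step_error_def Km[symmetric] unfolding K_def by (simp add: algebra_simps)
qed

lemma abs_exp_step_error_le_fine:
  assumes "a \<le> b" "0 < \<tau>" "b - a \<le> \<tau>"
    and f': "\<And>t. t \<in> {a..b} \<Longrightarrow> (f has_real_derivative f' t) (at t within {a..b})"
    and f'': "\<And>t. t \<in> {a..b} \<Longrightarrow> (f' has_real_derivative f'' t) (at t within {a..b})"
    and bound': "\<And>t. t \<in> {a..b} \<Longrightarrow> \<bar>f' t\<bar> \<le> M"
    and bound'': "\<And>t. t \<in> {a..b} \<Longrightarrow> \<bar>f'' t\<bar> \<le> M"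
  shows "\<bar>exp_step_error \<tau> f f' a b\<bar> \<le> M * ((b - a) ^ 3 / (4 * \<tau>) + (b - a) ^ 3 / (8 * \<tau> ^ 2))"
proof -
  define \<Delta> where "\<Delta> = b - a"
  define m where "m = (a + b) / 2"
  define R where "R = \<tau> * (1 - exp (- \<Delta> / \<tau>)) - \<Delta> * exp (- \<Delta> / (2 * \<tau>))"
  have m: "m \<in> {a..b}" using assms by (simp add: m_def)
  have M: "0 \<le> M" using bound' m by force
  have "continuous_on {a..b} f'" using f'' by (intro DERIV_continuous_on) blast
  then have dev: "((\<lambda>s. (exp ((s - b) / \<tau>) - exp ((m - b) / \<tau>)) * (f' s - f' m)) has_integral
      exp_step_error \<tau> f f' a b - f' m * R) {a..b}"
    using has_integral_exp_step_error_midpoint[OF assms(1,2) f'] by (simp add: m_def R_def \<Delta>_def)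
  \<comment> \<open>both factors of the integrand are O(\<Delta>), so the integral is O(\<Delta>^3)\<close>
  have "norm ((exp ((s - b) / \<tau>) - exp ((m - b) / \<tau>)) * (f' s - f' m)) \<le> (\<Delta> / 2 / \<tau>) * (M * (\<Delta> / 2))"
    if s: "s \<in> {a..b}" for s
  proof -
    have sm: "\<bar>s - m\<bar> \<le> \<Delta> / 2" using s by (auto simp: m_def \<Delta>_def abs_le_iff field_simps)
    have "\<bar>exp ((s - b) / \<tau>) - exp ((m - b) / \<tau>)\<bar> \<le> \<bar>(s - b) / \<tau> - (m - b) / \<tau>\<bar>"
      using s m assms by (intro abs_exp_diff_le_nonpos) (auto simp: divide_le_0_iff)
    also have "\<dots> = \<bar>s - m\<bar> / \<tau>" using assms by (simp flip: diff_divide_distrib)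
    also have "\<dots> \<le> \<Delta> / 2 / \<tau>" using sm assms(2) by (intro divide_right_mono) auto
    finally have K: "\<bar>exp ((s - b) / \<tau>) - exp ((m - b) / \<tau>)\<bar> \<le> \<Delta> / 2 / \<tau>" .
    have "\<bar>f' s - f' m\<bar> \<le> M * \<bar>s - m\<bar>"
      using abs_diff_le_of_deriv_bound[OF f'' bound'', of s m] s m by simp
    then have "\<bar>f' s - f' m\<bar> \<le> M * (\<Delta> / 2)"
      using mult_left_mono[OF sm M] by linarith
    then show ?thesis
      unfolding real_norm_def abs_mult by (rule mult_mono[OF K _ order_trans[OF abs_ge_zero K] abs_ge_zero])
  qed
  then have "norm (exp_step_error \<tau> f f' a b - f' m * R) \<le> (\<Delta> / 2 / \<tau>) * (M * (\<Delta> / 2)) * (b - a)"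
    using assms M
    by (intro has_integral_bound_real[OF _ finite.emptyI dev, unfolded content_real[OF \<open>a \<le> b\<close>]])
      (auto simp: \<Delta>_def)
  then have "\<bar>exp_step_error \<tau> f f' a b - f' m * R\<bar> \<le> M * (\<Delta> ^ 3 / (4 * \<tau>))"
    by (simp add: \<Delta>_def power3_eq_cube mult_ac)
  moreover have "\<bar>f' m * R\<bar> \<le> M * (\<Delta> ^ 3 / (8 * \<tau> ^ 2))"
    unfolding abs_mult R_def using bound'[OF m] exp_midpoint_rule_error[of \<tau> \<Delta>] assms M
    by (intro mult_mono) (auto simp: \<Delta>_def)
  ultimately show ?thesis
    using abs_triangle_ineq[of "exp_step_error \<tau> f f' a b - f' m * R" "f' m * R"]
    unfolding \<Delta>_def distrib_left by linarith
qed

lemma abs_exp_step_error_le: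
  assumes "a \<le> b" "0 < \<tau>"
    and f': "\<And>t. t \<in> {a..b} \<Longrightarrow> (f has_real_derivative f' t) (at t within {a..b})"
    and f'': "\<And>t. t \<in> {a..b} \<Longrightarrow> (f' has_real_derivative f'' t) (at t within {a..b})"
    and bound': "\<And>t. t \<in> {a..b} \<Longrightarrow> \<bar>f' t\<bar> \<le> M"
    and bound'': "\<And>t. t \<in> {a..b} \<Longrightarrow> \<bar>f'' t\<bar> \<le> M"
  shows "\<bar>exp_step_error \<tau> f f' a b\<bar> \<le> (1/2 + 5 / \<tau>) * (b - a)\<^sup>2 * M * (1 - exp (- (b - a) / \<tau>))"
proof -
  define \<Delta> where "\<Delta> = b - a"
  have "0 \<le> M" using bound' \<open>a \<le> b\<close> by force
  show ?thesis
  proof (cases "\<Delta> \<le> \<tau>")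
    case True
    have "\<bar>exp_step_error \<tau> f f' a b\<bar> \<le> M * (\<Delta> ^ 3 / (4 * \<tau>) + \<Delta> ^ 3 / (8 * \<tau> ^ 2))"
      using abs_exp_step_error_le_fine[OF assms(1,2) _ f' f'' bound' bound''] True by (simp add: \<Delta>_def)
    also have "\<dots> = (1/2 + 1 / (4 * \<tau>)) * \<Delta>\<^sup>2 * M * (\<Delta> / \<tau> / 2)"
      using assms by (simp add: power2_eq_square power3_eq_cube field_simps)
    also have "\<dots> \<le> (1/2 + 5 / \<tau>) * \<Delta>\<^sup>2 * M * (1 - exp (- (\<Delta> / \<tau>)))"
      using one_minus_exp_neg_ge_half[of "\<Delta> / \<tau>"] True assms \<open>0 \<le> M\<close>
        divide_left_mono[of \<tau> "4 * \<tau>" 1]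
      by (intro mult_mono) (auto simp: \<Delta>_def)
    finally show ?thesis by (simp add: \<Delta>_def minus_divide_left)
  next
    case False
    have "1 / 2 \<le> 1 - exp (- 1 :: real)" using one_minus_exp_neg_ge_half[of 1] by simp
    also have "\<dots> \<le> 1 - exp (- (\<Delta> / \<tau>))" using False assms by simp
    finally have half: "1 / 2 \<le> 1 - exp (- (\<Delta> / \<tau>))" .
    have "continuous_on {a..b} f'" using f'' by (intro DERIV_continuous_on) blast
    then have "\<bar>exp_step_error \<tau> f f' a b\<bar> \<le> 2 * M * \<Delta>"
      using abs_exp_step_error_le_crude[OF assms(1,2) f' _ bound'] by (simp add: \<Delta>_def)
    also have "\<dots> \<le> (5 / \<tau>) * \<Delta>\<^sup>2 * M * (1 / 2)"
      using False assms \<open>0 \<le> M\<close> by (simp add: power2_eq_square field_simps mult_left_mono)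
    also have "\<dots> \<le> (1/2 + 5 / \<tau>) * \<Delta>\<^sup>2 * M * (1 - exp (- (\<Delta> / \<tau>)))"
      using half assms \<open>0 \<le> M\<close> by (intro mult_mono) auto
    finally show ?thesis by (simp add: \<Delta>_def minus_divide_left)
  qed
qed

lemma q_cont_split:
  assumes "0 \<le> a" "a \<le> b" "continuous_on {0..b} f'" "\<tau> k \<noteq> 0"
  shows "q_cont \<beta> \<tau> f' k b = exp (- (b - a) / \<tau> k) * q_cont \<beta> \<tau> f' k a
           + \<beta> k * integral {a..b} (\<lambda>s. exp ((s - b) / \<tau> k) * f' s)"
proof -
  have kernel: "exp ((s - b) / \<tau> k) = exp (- (b - a) / \<tau> k) * exp ((s - a) / \<tau> k)" for s
    using assms(4) by (simp flip: exp_add add: field_simps)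
  have int: "(\<lambda>s. \<beta> k * exp ((s - b) / \<tau> k) * f' s) integrable_on {0..b}"
    using assms by (intro integrable_continuous_interval continuous_intros) auto
  have split: "q_cont \<beta> \<tau> f' k b = integral {0..a} (\<lambda>s. \<beta> k * exp ((s - b) / \<tau> k) * f' s)
        + integral {a..b} (\<lambda>s. \<beta> k * exp ((s - b) / \<tau> k) * f' s)"
    unfolding q_cont_def using Henstock_Kurzweil_Integration.integral_combine[OF assms(1,2) int] by simp
  have "integral {0..a} (\<lambda>s. \<beta> k * exp ((s - b) / \<tau> k) * f' s)
      = integral {0..a} (\<lambda>s. exp (- (b - a) / \<tau> k) * (\<beta> k * exp ((s - a) / \<tau> k) * f' s))"
    unfolding kernel by (simp only: mult_ac)
  then show ?thesis
    using split unfolding q_cont_def by (simp add: mult.assoc)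
qed

lemma abs_le_of_damped_recurrence:
  fixes E l :: "nat \<Rightarrow> real"
  assumes "\<bar>E 0\<bar> \<le> B" "0 \<le> r"
    and step: "\<And>j. j < n \<Longrightarrow> E (Suc j) = r * E j + l j"
    and source: "\<And>j. j < n \<Longrightarrow> \<bar>l j\<bar> \<le> (1 - r) * B"
  shows "\<bar>E n\<bar> \<le> B"
proof -
  have "\<bar>E j\<bar> \<le> B" if "j \<le> n" for j
    using that
  proof (induction j)
    case 0
    then show ?case using assms(1) by simp
  next
    case (Suc j)
    then have "j < n" by simp
    have "\<bar>E (Suc j)\<bar> \<le> r * \<bar>E j\<bar> + \<bar>l j\<bar>"
      using step[OF \<open>j < n\<close>] \<open>0 \<le> r\<close> by (simp add: abs_mult abs_triangle_ineq order_trans[OF abs_triangle_ineq])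
    also have "\<dots> \<le> r * B + (1 - r) * B"
      using Suc \<open>j < n\<close> source \<open>0 \<le> r\<close> by (intro add_mono mult_left_mono) auto
    finally show ?case by (simp add: algebra_simps)
  qed
  then show ?thesis by simp
qed

lemma q_cont_sub_q_disc_Suc:
  assumes "0 \<le> \<Delta>" "continuous_on {0..real (Suc j) * \<Delta>} f'" "\<tau> k \<noteq> 0"
  shows "q_cont \<beta> \<tau> f' k (real (Suc j) * \<Delta>) - q_disc \<beta> \<tau> f \<Delta> k (Suc j)
           = exp (- \<Delta> / \<tau> k) * (q_cont \<beta> \<tau> f' k (real j * \<Delta>) - q_disc \<beta> \<tau> f \<Delta> k j)
             + \<beta> k * exp_step_error (\<tau> k) f f' (real j * \<Delta>) (real (Suc j) * \<Delta>)"
proof -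
  have "(exp (- \<Delta> / (2 * \<tau> k)))\<^sup>2 = exp (- \<Delta> / \<tau> k)"
    unfolding power2_eq_square by (simp flip: exp_add)
  moreover have "real j * \<Delta> \<le> real (Suc j) * \<Delta>"
    using assms(1) by (intro mult_right_mono) auto
  ultimately show ?thesis
    using q_cont_split[of "real j * \<Delta>" "real (Suc j) * \<Delta>" f' \<tau> k \<beta>] assms
    by (simp add: exp_step_error_def algebra_simps)
qed

lemma abs_q_cont_sub_q_disc_le:
  assumes "0 < \<Delta>" "real n * \<Delta> \<le> T" "0 < \<tau> k" "0 \<le> \<beta> k"
    and f': "\<And>t. t \<in> {0..T} \<Longrightarrow> (f has_real_derivative f' t) (at t within {0..T})"
    and f'': "\<And>t. t \<in> {0..T} \<Longrightarrow> (f' has_real_derivative f'' t) (at t within {0..T})"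
    and bound': "\<And>t. t \<in> {0..T} \<Longrightarrow> \<bar>f' t\<bar> \<le> M"
    and bound'': "\<And>t. t \<in> {0..T} \<Longrightarrow> \<bar>f'' t\<bar> \<le> M"
  shows "\<bar>q_cont \<beta> \<tau> f' k (real n * \<Delta>) - q_disc \<beta> \<tau> f \<Delta> k n\<bar> \<le> \<beta> k * (1/2 + 5 / \<tau> k) * \<Delta>\<^sup>2 * M"
proof -
  define r where "r = exp (- \<Delta> / \<tau> k)"
  define E where "E j = q_cont \<beta> \<tau> f' k (real j * \<Delta>) - q_disc \<beta> \<tau> f \<Delta> k j" for j
  define B where "B = \<beta> k * (1/2 + 5 / \<tau> k) * \<Delta>\<^sup>2 * M"
  have "0 \<le> T" using assms(1,2) by (meson order_trans zero_le_mult_iff of_nat_0_le_iff less_imp_le)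
  then have "0 \<le> M" using bound' by force
  have cont: "continuous_on {0..T} f'" using f'' by (intro DERIV_continuous_on) blast
  show ?thesis
    unfolding E_def[symmetric] B_def[symmetric]
  proof (rule abs_le_of_damped_recurrence)
    show "\<bar>E 0\<bar> \<le> B" using assms \<open>0 \<le> M\<close> by (simp add: E_def B_def q_cont_def)
    show "0 \<le> r" by (simp add: r_def)
    fix j assume "j < n"
    define a b where "a = real j * \<Delta>" and "b = real (Suc j) * \<Delta>"
    have "real (Suc j) * \<Delta> \<le> real n * \<Delta>"
      using \<open>j < n\<close> assms(1) by (intro mult_right_mono) auto
    then have ab: "0 \<le> a" "a \<le> b" "b - a = \<Delta>" "b \<le> T"
      using assms(1,2) by (auto simp: a_def b_def algebra_simps)
    show "E (Suc j) = r * E j + \<beta> k * exp_step_error (\<tau> k) f f' a b"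
      using assms(1,3) ab(4) unfolding E_def r_def a_def b_def
      by (intro q_cont_sub_q_disc_Suc continuous_on_subset[OF cont]) auto
    have "\<bar>exp_step_error (\<tau> k) f f' a b\<bar>
        \<le> (1/2 + 5 / \<tau> k) * (b - a)\<^sup>2 * M * (1 - exp (- (b - a) / \<tau> k))"
      using ab by (intro abs_exp_step_error_le[OF ab(2) assms(3)])
        (auto intro: DERIV_subset[OF f'] DERIV_subset[OF f''] bound' bound'')
    then have "\<beta> k * \<bar>exp_step_error (\<tau> k) f f' a b\<bar> \<le> \<beta> k * ((1/2 + 5 / \<tau> k) * \<Delta>\<^sup>2 * M * (1 - r))"
      using assms(4) unfolding ab(3) r_def by (rule mult_left_mono)
    then show "\<bar>\<beta> k * exp_step_error (\<tau> k) f f' a b\<bar> \<le> (1 - r) * B"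
      using assms(4) by (simp add: abs_mult B_def mult_ac)
  qed
qed

lemma abs_deriv_sub_backward_difference_le:
  assumes "a < b"
    and f': "\<And>t. t \<in> {a..b} \<Longrightarrow> (f has_real_derivative f' t) (at t within {a..b})"
    and f'': "\<And>t. t \<in> {a..b} \<Longrightarrow> (f' has_real_derivative f'' t) (at t within {a..b})"
    and bound'': "\<And>t. t \<in> {a..b} \<Longrightarrow> \<bar>f'' t\<bar> \<le> M"
  shows "\<bar>f' b - (f b - f a) / (b - a)\<bar> \<le> M * (b - a) / 2"
proof -
  have "((\<lambda>s. M * (b - s)) has_integral - (M * (b - b)\<^sup>2 / 2) - - (M * (b - a)\<^sup>2 / 2)) {a..b}"
    using assms(1) by (intro has_integral_real_derivative) (auto intro!: derivative_eq_intros simp: field_simps)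
  then have majorant: "((\<lambda>s. M * (b - s)) has_integral M * (b - a)\<^sup>2 / 2) {a..b}" by simp
  have diff: "((\<lambda>s. f' b - f' s) has_integral (b - a) * f' b - (f b - f a)) {a..b}"
    using has_integral_const_real[of "f' b" a b] has_integral_real_derivative[OF _ f'] assms(1)
    by (intro has_integral_diff) auto
  have "norm ((b - a) * f' b - (f b - f a)) \<le> (M * (b - a)\<^sup>2 / 2) \<bullet> 1"
  proof (rule has_integral_norm_bound_integral_component[OF diff majorant])
    fix s assume "s \<in> {a..b}"
    then show "norm (f' b - f' s) \<le> (M * (b - s)) \<bullet> 1"
      using abs_diff_le_of_deriv_bound[OF f'' bound'', of b s] by simp
  qed
  then have num: "\<bar>(b - a) * f' b - (f b - f a)\<bar> \<le> M * (b - a)\<^sup>2 / 2" by simp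
  have "f' b - (f b - f a) / (b - a) = ((b - a) * f' b - (f b - f a)) / (b - a)"
    using assms(1) by (simp add: field_simps)
  then have "\<bar>f' b - (f b - f a) / (b - a)\<bar> = \<bar>(b - a) * f' b - (f b - f a)\<bar> / (b - a)"
    using assms(1) by simp
  also have "\<dots> \<le> (M * (b - a)\<^sup>2 / 2) / (b - a)"
    using num assms(1) by (intro divide_right_mono) auto
  also have "\<dots> = M * (b - a) / 2"
    using assms(1) by (simp add: power2_eq_square field_simps)
  finally show ?thesis .
qed

lemma W3inf_abs_le_w3_norm:
  assumes "W3inf T f f1 f2" "t \<in> {0..T}"
  shows "\<bar>f1 t\<bar> \<le> w3_norm T f f1 f2" and "\<bar>f2 t\<bar> \<le> w3_norm T f f1 f2"
proof -
  have "continuous_on {0..T} f1"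
    using assms(1) unfolding W3inf_def by (intro DERIV_continuous_on) blast
  moreover obtain L where "L-lipschitz_on {0..T} f2"
    using assms(1) unfolding W3inf_def by blast
  then have "continuous_on {0..T} f2" by (rule lipschitz_on_continuous_on)
  ultimately have "bdd_above ((\<lambda>t. \<bar>g t\<bar>) ` {0..T})" if "g \<in> {f1, f2}" for g
    using that by (auto intro!: bounded_imp_bdd_above compact_imp_bounded compact_continuous_image continuous_intros)
  then have "\<bar>f1 t\<bar> \<le> (SUP t\<in>{0..T}. \<bar>f1 t\<bar>)" "\<bar>f2 t\<bar> \<le> (SUP t\<in>{0..T}. \<bar>f2 t\<bar>)"
    using assms(2) by (auto intro: cSUP_upper)
  then show "\<bar>f1 t\<bar> \<le> w3_norm T f f1 f2" and "\<bar>f2 t\<bar> \<le> w3_norm T f f1 f2"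
    unfolding w3_norm_def by linarith+
qed

lemma abs_prony_cont_sub_prony_disc_le:
  assumes "0 < \<Delta>" "1 \<le> n" "real n * \<Delta> \<le> T" "0 \<le> \<beta> 0"
    and \<beta>: "\<And>k. k \<in> {1..N} \<Longrightarrow> 0 \<le> \<beta> k" and \<tau>: "\<And>k. k \<in> {1..N} \<Longrightarrow> 0 < \<tau> k"
    and f1: "\<And>t. t \<in> {0..T} \<Longrightarrow> (f has_real_derivative f1 t) (at t within {0..T})"
    and f2: "\<And>t. t \<in> {0..T} \<Longrightarrow> (f1 has_real_derivative f2 t) (at t within {0..T})"
    and bound1: "\<And>t. t \<in> {0..T} \<Longrightarrow> \<bar>f1 t\<bar> \<le> M"
    and bound2: "\<And>t. t \<in> {0..T} \<Longrightarrow> \<bar>f2 t\<bar> \<le> M"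
  shows "\<bar>prony_cont N \<beta> \<tau> f1 (real n * \<Delta>) - prony_disc N \<beta> \<tau> f \<Delta> n\<bar>
           \<le> \<Delta> * (\<beta> 0 / 2 + (\<Sum>k=1..N. \<beta> k * (1/2 + 5 / \<tau> k)) * \<Delta>) * M"
proof -
  define a where "a = real (n - 1) * \<Delta>"
  have a: "0 \<le> a" "real n * \<Delta> - a = \<Delta>"
    using assms(1,2) by (auto simp: a_def of_nat_diff algebra_simps)
  then have "\<bar>f1 (real n * \<Delta>) - (f (real n * \<Delta>) - f a) / (real n * \<Delta> - a)\<bar> \<le> M * (real n * \<Delta> - a) / 2"
    using assms(1,3) by (intro abs_deriv_sub_backward_difference_le[where f'' = f2])
      (auto intro: DERIV_subset[OF f1] DERIV_subset[OF f2] bound2)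
  then have base: "\<bar>f1 (real n * \<Delta>) - (f (real n * \<Delta>) - f (real (n - 1) * \<Delta>)) / \<Delta>\<bar> \<le> M * \<Delta> / 2"
    unfolding a(2) by (simp add: a_def)
  have modes: "\<bar>q_cont \<beta> \<tau> f1 k (real n * \<Delta>) - q_disc \<beta> \<tau> f \<Delta> k n\<bar> \<le> \<beta> k * (1/2 + 5 / \<tau> k) * \<Delta>\<^sup>2 * M"
    if "k \<in> {1..N}" for k
    using abs_q_cont_sub_q_disc_le[where \<tau> = \<tau> and \<beta> = \<beta> and k = k, OF assms(1,3) \<tau>[OF that] \<beta>[OF that] f1 f2 bound1 bound2] .
  have "\<bar>prony_cont N \<beta> \<tau> f1 (real n * \<Delta>) - prony_disc N \<beta> \<tau> f \<Delta> n\<bar>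
      = \<bar>\<beta> 0 * (f1 (real n * \<Delta>) - (f (real n * \<Delta>) - f (real (n - 1) * \<Delta>)) / \<Delta>)
         + (\<Sum>k=1..N. q_cont \<beta> \<tau> f1 k (real n * \<Delta>) - q_disc \<beta> \<tau> f \<Delta> k n)\<bar>"
    unfolding prony_cont_def prony_disc_def by (simp add: sum_subtractf algebra_simps diff_divide_distrib)
  also have "\<dots> \<le> \<beta> 0 * (M * \<Delta> / 2) + (\<Sum>k=1..N. \<beta> k * (1/2 + 5 / \<tau> k) * \<Delta>\<^sup>2 * M)"
  proof (rule order_trans[OF abs_triangle_ineq add_mono])
    show "\<bar>\<beta> 0 * (f1 (real n * \<Delta>) - (f (real n * \<Delta>) - f (real (n - 1) * \<Delta>)) / \<Delta>)\<bar>
        \<le> \<beta> 0 * (M * \<Delta> / 2)"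
      unfolding abs_mult abs_of_nonneg[OF assms(4)] using base assms(4) by (rule mult_left_mono)
    show "\<bar>\<Sum>k=1..N. q_cont \<beta> \<tau> f1 k (real n * \<Delta>) - q_disc \<beta> \<tau> f \<Delta> k n\<bar>
        \<le> (\<Sum>k=1..N. \<beta> k * (1/2 + 5 / \<tau> k) * \<Delta>\<^sup>2 * M)"
      using modes by (intro order_trans[OF sum_abs sum_mono]) simp
  qed
  also have "\<dots> = \<beta> 0 * (M * \<Delta> / 2) + (\<Sum>k=1..N. \<beta> k * (1/2 + 5 / \<tau> k)) * (\<Delta>\<^sup>2 * M)"
    unfolding sum_distrib_right by (simp add: mult.assoc)
  also have "\<dots> = \<Delta> * (\<beta> 0 / 2 + (\<Sum>k=1..N. \<beta> k * (1/2 + 5 / \<tau> k)) * \<Delta>) * M"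
    by (simp add: power2_eq_square algebra_simps)
  finally show ?thesis .
qed

theorem lemma2:
  fixes \<alpha> :: real and N :: nat and \<beta> \<tau> :: "nat \<Rightarrow> real"
  assumes "0 < \<alpha>" and "\<alpha> < 1" and "N \<ge> 1"
    and "\<forall>k\<in>{0..N}. \<beta> k > 0" and "\<forall>k\<in>{1..N}. \<tau> k > 0"
  shows "\<exists>C>0. \<forall>T f f1 f2 (NT::nat) n.
           T > 0 \<longrightarrow> NT \<ge> 1 \<longrightarrow> W3inf T f f1 f2 \<longrightarrow> n \<in> {1..NT} \<longrightarrow>
           \<bar>prony_cont N \<beta> \<tau> f1 (real n * (T / real NT)) - prony_disc N \<beta> \<tau> f (T / real NT) n\<bar>
             \<le> (T / real NT) * (\<beta> 0 / 2 + C * (T / real NT)) * w3_norm T f f1 f2"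
proof -
  \<comment> \<open>\<alpha> only enters through the choice of \<beta> and \<tau>; the estimate holds for any positive ones.\<close>
  define C where "C = (\<Sum>k=1..N. \<beta> k * (1/2 + 5 / \<tau> k))"
  have "0 < C"
    unfolding C_def using assms(3-5) by (intro sum_pos mult_pos_pos add_pos_pos divide_pos_pos) auto
  show ?thesis
  proof (intro exI[of _ C] conjI allI impI)
    fix T f f1 f2 and NT n :: nat
    assume "0 < T" "1 \<le> NT" and W: "W3inf T f f1 f2" and n: "n \<in> {1..NT}"
    have "real n * (T / real NT) \<le> real NT * (T / real NT)"
      using n \<open>0 < T\<close> by (intro mult_right_mono) auto
    then have "real n * (T / real NT) \<le> T" using \<open>1 \<le> NT\<close> by simp
    then show "\<bar>prony_cont N \<beta> \<tau> f1 (real n * (T / real NT)) - prony_disc N \<beta> \<tau> f (T / real NT) n\<bar>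
        \<le> (T / real NT) * (\<beta> 0 / 2 + C * (T / real NT)) * w3_norm T f f1 f2"
      unfolding C_def using \<open>0 < T\<close> \<open>1 \<le> NT\<close> n assms(4,5) W W3inf_abs_le_w3_norm[OF W]
      by (intro abs_prony_cont_sub_prony_disc_le) (auto simp: W3inf_def less_imp_le)
  qed fact
qed

end
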